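(* Let $E$ and $F$ be finite-dimensional real vector spaces, $M\subseteq E$ and $N\subseteq F$ convex polytopes with non-empty interior, and $\phi\colon U\to V$ a $C^1$-map between open subsets $U\subseteq M$ and $V\subseteq N$. For $x\in M$ let $M(x)$ be the smallest face of $M$ containing $x$ and $E(x):=\mathrm{span}_{\mathbb R}(M(x)-x)$; for $y\in N$ let $N(y)$ be the smallest face of $N$ containing $y$ and $F(y):=\mathrm{span}_{\mathbb R}(N(y)-y)$. Then for every $x\in U$: (a) $\phi'(x)(E(x))\subseteq F(\phi(x))$; (b) if $\phi'(x)\colon E\to F$ is injective, then $\dim E(x)\le\dim F(\phi(x))$; (c) if $\phi\colon U\to V$ is a $C^1$-diffeomorphism, then $\phi'(x)(E(x))=F(\phi(x))$.
   Context: A convex polytope is the convex hull of a finite set; $U$ and $V$ are open in $M$ resp. $N$ with the induced topology, and are locally convex with dense interior. A map $\phi\colon U\to F$ is $C^1$ if it is continuous, $C^1$ on the interior $U^0$ (relative to $E$), and $(x,y)\mapsto \phi'(x)y$ extends continuously from $U^0\times E$ to $U\times E$, defining $\phi'(x)$ for all $x\in U$. A $C^1$-diffeomorphism is a bijective $C^1$ map with $C^1$ inverse. *)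

theory Defs
  imports "HOL-Analysis.Analysis"
begin

text \<open>The smallest face of a convex set M containing x (faces are closed under
intersection, so this is the intersection of all faces containing x).\<close>
definition smallest_face :: "'a::real_vector set \<Rightarrow> 'a \<Rightarrow> 'a set" where
  "smallest_face M x = \<Inter>{T. T face_of M \<and> x \<in> T}"

definition face_space :: "'a::real_vector set \<Rightarrow> 'a \<Rightarrow> 'a set" where
  "face_space M x = span ((\<lambda>y. y - x) ` smallest_face M x)"

text \<open>C^1 in the sense of the paper, with f' the (extended) derivative:
f continuous on U, differentiable on the interior of U (in the ambient space)
with derivative f' x there, and (x,y) \<mapsto> f' x y continuous on U \<times> E.\<close>
definition C1_with_deriv ::
  "'a::euclidean_space set \<Rightarrow> ('a \<Rightarrow> 'b::euclidean_space) \<Rightarrow> ('a \<Rightarrow> 'a \<Rightarrow> 'b) \<Rightarrow> bool" where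
  "C1_with_deriv U f f' \<longleftrightarrow>
     continuous_on U f \<and>
     (\<forall>x\<in>interior U. (f has_derivative f' x) (at x)) \<and>
     continuous_on (U \<times> UNIV) (\<lambda>(x, y). f' x y)"

definition C1_map :: "'a::euclidean_space set \<Rightarrow> ('a \<Rightarrow> 'b::euclidean_space) \<Rightarrow> bool" where
  "C1_map U f \<longleftrightarrow> (\<exists>f'. C1_with_deriv U f f')"

definition C1_diffeo ::
  "'a::euclidean_space set \<Rightarrow> 'b::euclidean_space set \<Rightarrow> ('a \<Rightarrow> 'b) \<Rightarrow> bool" where
  "C1_diffeo U V f \<longleftrightarrow> bij_betw f U V \<and> C1_map U f \<and> C1_map V (inv_into U f)"

end

theory Submission
  imports Defs
begin

text \<open>Write N as a finite intersection of half-spaces a \<bullet> z \<le> b. Then F(y) is exactly the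
space of vectors annihilated by the constraints active at y, and for v \<in> E(x) the line
x + t v stays in U for small t of both signs. Each active constraint a \<bullet> \<phi>(x + t v) therefore
attains its maximum at t = 0, so a \<bullet> \<phi>'(x) v = 0; this is (a). Part (b) is linear algebra, and
(c) follows by applying (a) to the inverse \<psi> and differentiating \<phi> \<circ> \<psi> = id along lines in
F(\<phi> x). The analytic point is that at boundary points \<phi>'(x) is only a limit of derivatives;
a mean value estimate on the convex set M \<inter> cball x \<rho>, extended from its interior by
continuity, shows that it is still the derivative of \<phi> within U.\<close>

lemma polyhedron_finite_inequalities:
  fixes N :: "'a::euclidean_space set"
  assumes "polyhedron N"
  obtains A :: "('a \<times> real) set" where "finite A" "N = {z. \<forall>(a, b)\<in>A. a \<bullet> z \<le> b}"
proof -
  obtain F where F: "finite F" "N = \<Inter>F" "\<forall>h\<in>F. \<exists>a b. a \<noteq> 0 \<and> h = {x. a \<bullet> x \<le> b}"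
    using assms unfolding polyhedron_def by blast
  then have "\<forall>h\<in>F. \<exists>p. h = {x. fst p \<bullet> x \<le> snd p}"
    by force
  then obtain g where g: "\<forall>h\<in>F. h = {x. fst (g h) \<bullet> x \<le> snd (g h)}"
    by (rule bchoice[elim_format]) blast
  have "N = {z. \<forall>(a, b)\<in>g ` F. a \<bullet> z \<le> b}"
    using F(2) g by (auto simp: case_prod_beta)
  with F(1) that show thesis by blast
qed

definition active_kernel :: "('a::real_inner \<times> real) set \<Rightarrow> 'a \<Rightarrow> 'a set" where
  "active_kernel A y = {w. \<forall>(a, b)\<in>A. a \<bullet> y = b \<longrightarrow> a \<bullet> w = 0}"

lemma subspace_active_kernel: "subspace (active_kernel A y)"
  unfolding subspace_def active_kernel_def by (fastforce simp: inner_add_right)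

lemma eventually_in_polyhedron_along_active_kernel:
  fixes y :: "'a::real_inner"
  assumes "finite A" and N: "N = {z. \<forall>(a, b)\<in>A. a \<bullet> z \<le> b}"
    and y: "y \<in> N" and w: "w \<in> active_kernel A y"
  shows "\<forall>\<^sub>F t in nhds 0. y + t *\<^sub>R w \<in> N"
proof -
  have "\<forall>\<^sub>F t in nhds 0. a \<bullet> (y + t *\<^sub>R w) \<le> b" if ab: "(a, b) \<in> A" for a b
  proof (cases "a \<bullet> y = b")
    case True
    then have "a \<bullet> w = 0" using w ab unfolding active_kernel_def by auto
    with True show ?thesis by (simp add: inner_add_right)
  next
    case False
    then have "a \<bullet> y < b" using y ab N by fastforce
    moreover have "((\<lambda>t. a \<bullet> (y + t *\<^sub>R w)) \<longlongrightarrow> a \<bullet> (y + 0 *\<^sub>R w)) (nhds 0)"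
      by (intro tendsto_intros filterlim_ident)
    ultimately have "\<forall>\<^sub>F t in nhds 0. a \<bullet> (y + t *\<^sub>R w) < b"
      by (simp add: order_tendstoD(2))
    then show ?thesis by (rule eventually_mono) simp
  qed
  then have "\<forall>\<^sub>F t in nhds 0. \<forall>(a, b)\<in>A. a \<bullet> (y + t *\<^sub>R w) \<le> b"
    using \<open>finite A\<close> by (simp add: eventually_ball_finite case_prod_beta)
  then show ?thesis unfolding N by simp
qed

lemma face_space_eq_active_kernel:
  fixes y :: "'a::euclidean_space"
  assumes "finite A" and N: "N = {z. \<forall>(a, b)\<in>A. a \<bullet> z \<le> b}" and y: "y \<in> N"
  shows "face_space N y = active_kernel A y"
proof
  have "N = (\<Inter>p\<in>A. {z. fst p \<bullet> z \<le> snd p})"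
    unfolding N by force
  then have "convex N"
    by (simp add: convex_INT convex_halfspace_le)
  have "z - y \<in> active_kernel A y" if z: "z \<in> smallest_face N y" for z
  proof -
    have "a \<bullet> z = b" if ab: "(a, b) \<in> A" "a \<bullet> y = b" for a b
    proof -
      have "N \<inter> {z. a \<bullet> z = b} face_of N"
        using ab N by (intro face_of_Int_supporting_hyperplane_le \<open>convex N\<close>) auto
      then show ?thesis
        using z ab y unfolding smallest_face_def by blast
    qed
    then show ?thesis
      unfolding active_kernel_def by (auto simp: inner_diff_right)
  qed
  then show "face_space N y \<subseteq> active_kernel A y"
    unfolding face_space_def by (intro span_minimal subspace_active_kernel) blast
next
  show "active_kernel A y \<subseteq> face_space N y"
  proof
    fix w assume w: "w \<in> active_kernel A y"
    show "w \<in> face_space N y"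
    proof (cases "w = 0")
      case True
      then show ?thesis by (simp add: face_space_def span_zero)
    next
      case False
      obtain d where d: "d > 0" "\<And>t. dist t 0 < d \<Longrightarrow> y + t *\<^sub>R w \<in> N"
        using eventually_in_polyhedron_along_active_kernel[OF assms w]
        unfolding eventually_nhds_metric by blast
      define u where "u = (d / 2) *\<^sub>R w"
      have "y + u \<in> N" "y - u \<in> N"
        using d(2)[of "d / 2"] d(2)[of "- d / 2"] d(1) by (simp_all add: u_def)
      moreover have "y \<in> open_segment (y - u) (y + u)"
        using midpoint_in_open_segment[of "y - u" "y + u"] False d(1)
        by (simp add: u_def midpoint_def scaleR_2 flip: scaleR_minus_left)
      ultimately have "y + u \<in> smallest_face N y"
        unfolding smallest_face_def face_of_def by blast
      then have "u \<in> face_space N y"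
        unfolding face_space_def by (force intro: span_base)
      then have "(2 / d) *\<^sub>R u \<in> face_space N y"
        unfolding face_space_def by (rule span_mul)
      with d(1) show ?thesis by (simp add: u_def)
    qed
  qed
qed

lemma eventually_line_in_openin_polyhedron:
  fixes M :: "'a::euclidean_space set"
  assumes "polyhedron M" and U: "openin (top_of_set M) U"
    and x: "x \<in> U" and v: "v \<in> face_space M x"
  shows "\<forall>\<^sub>F t in nhds 0. x + t *\<^sub>R v \<in> U"
proof -
  obtain A where A: "finite A" "M = {z. \<forall>(a, b)\<in>A. a \<bullet> z \<le> b}"
    using polyhedron_finite_inequalities[OF assms(1)] by blast
  obtain Q where Q: "open Q" "U = M \<inter> Q"
    using U by (auto simp: openin_open)
  have "\<forall>\<^sub>F t in nhds 0. x + t *\<^sub>R v \<in> M"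
    using x v Q face_space_eq_active_kernel[OF A]
    by (intro eventually_in_polyhedron_along_active_kernel[OF A]) auto
  moreover have "((\<lambda>t. x + t *\<^sub>R v) \<longlongrightarrow> x + 0 *\<^sub>R v) (nhds 0)"
    by (intro tendsto_intros filterlim_ident)
  then have "\<forall>\<^sub>F t in nhds 0. x + t *\<^sub>R v \<in> Q"
    using Q x by (auto intro: topological_tendstoD)
  ultimately show ?thesis
    unfolding Q(2) by (rule eventually_conj[THEN eventually_mono]) simp
qed

lemma C1_with_deriv_continuous_on_direction:
  assumes "C1_with_deriv U f f'"
  shows "continuous_on U (\<lambda>x. f' x h)"
proof -
  have "continuous_on (U \<times> UNIV) (\<lambda>(x, y). f' x y)"
    using assms by (simp add: C1_with_deriv_def)
  then have "continuous_on U (\<lambda>x. (\<lambda>(x, y). f' x y) (x, h))"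
    by (rule continuous_on_compose2) (auto intro: continuous_intros)
  then show ?thesis by simp
qed

lemma openin_convex_subset_closure_interior:
  fixes M :: "'a::euclidean_space set"
  assumes "convex M" and "interior M \<noteq> {}" and "openin (top_of_set M) U"
  shows "U \<subseteq> closure (interior U)"
proof -
  obtain Q where Q: "open Q" "U = M \<inter> Q"
    using assms(3) by (auto simp: openin_open)
  have "U \<subseteq> Q \<inter> closure (interior M)"
    using Q closure_subset convex_closure_interior[OF assms(1,2)] by blast
  also have "\<dots> \<subseteq> closure (Q \<inter> interior M)"
    using Q(1) by (rule open_Int_closure_subset)
  also have "Q \<inter> interior M = interior U"
    using Q by (simp add: interior_open Int_commute)
  finally show ?thesis .
qed

lemma C1_with_deriv_linear:
  fixes M :: "'a::euclidean_space set" and f :: "'a \<Rightarrow> 'b::euclidean_space"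
  assumes "convex M" and "interior M \<noteq> {}" and U: "openin (top_of_set M) U"
    and C1: "C1_with_deriv U f f'" and z: "z \<in> U"
  shows "linear (f' z)"
proof -
  have "z \<in> closure (interior U)"
    using openin_convex_subset_closure_interior[OF assms(1-3)] z by blast
  then obtain s where s: "\<And>n. s n \<in> interior U" "s \<longlonglongrightarrow> z"
    unfolding closure_sequential by blast
  have lin: "linear (f' (s n))" for n
    using C1 s(1) unfolding C1_with_deriv_def by (blast intro: has_derivative_linear)
  have lim: "(\<lambda>n. f' (s n) h) \<longlonglongrightarrow> f' z h" for h
    using s interior_subset z
    by (intro continuous_on_tendsto_compose[OF C1_with_deriv_continuous_on_direction[OF C1]])
      (auto intro: always_eventually)
  show ?thesis
  proof (rule linearI)
    fix a b
    have "(\<lambda>n. f' (s n) a + f' (s n) b) \<longlonglongrightarrow> f' z (a + b)"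
      using lim[of "a + b"] lin by (simp add: linear_add)
    then show "f' z (a + b) = f' z a + f' z b"
      using tendsto_add[OF lim lim] by (rule LIMSEQ_unique)
  next
    fix c :: real and a
    have "(\<lambda>n. c *\<^sub>R f' (s n) a) \<longlonglongrightarrow> f' z (c *\<^sub>R a)"
      using lim[of "c *\<^sub>R a"] lin by (simp add: linear_scale)
    then show "f' z (c *\<^sub>R a) = c *\<^sub>R f' z a"
      using tendsto_scaleR[OF tendsto_const lim] by (rule LIMSEQ_unique)
  qed
qed

lemma C1_with_deriv_onorm_tendsto:
  fixes M :: "'a::euclidean_space set" and f :: "'a \<Rightarrow> 'b::euclidean_space"
  assumes "convex M" and "interior M \<noteq> {}" and U: "openin (top_of_set M) U"
    and C1: "C1_with_deriv U f f'" and y: "y \<in> U"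
  shows "((\<lambda>z. onorm (\<lambda>h. f' z h - f' y h)) \<longlongrightarrow> 0) (at y within U)"
proof (rule Lim_null_comparison)
  have lin: "linear (f' z)" if "z \<in> U" for z
    by (rule C1_with_deriv_linear[OF assms(1-4) that])
  have "norm (onorm (\<lambda>h. f' z h - f' y h)) \<le> (\<Sum>i\<in>Basis. norm (f' z i - f' y i))"
    if "z \<in> U" for z
    using lin[OF that] lin[OF y]
    by (simp add: onorm_pos_le onorm_componentwise bounded_linear_sub linear_conv_bounded_linear)
  then show "\<forall>\<^sub>F z in at y within U.
      norm (onorm (\<lambda>h. f' z h - f' y h)) \<le> (\<Sum>i\<in>Basis. norm (f' z i - f' y i))"
    by (auto simp: eventually_at_filter)
  have "((\<lambda>z. f' z i) \<longlongrightarrow> f' y i) (at y within U)" for i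
    using C1_with_deriv_continuous_on_direction[OF C1] y unfolding continuous_on_def by blast
  then show "((\<lambda>z. \<Sum>i\<in>Basis. norm (f' z i - f' y i)) \<longlongrightarrow> 0) (at y within U)"
    by (intro tendsto_null_sum tendsto_norm_zero LIM_zero)
qed

lemma differentiable_bound_closed_convex:
  fixes g :: "'a::euclidean_space \<Rightarrow> 'b::real_normed_vector"
  assumes K: "convex K" "closed K" "interior K \<noteq> {}" and cont: "continuous_on K g"
    and deriv: "\<And>x. x \<in> interior K \<Longrightarrow> (g has_derivative g' x) (at x)"
    and bound: "\<And>x. x \<in> interior K \<Longrightarrow> onorm (g' x) \<le> B"
    and "a \<in> K" "b \<in> K"
  shows "norm (g a - g b) \<le> B * norm (a - b)"
proof -
  let ?G = "\<lambda>p. norm (g (fst p) - g (snd p)) - B * norm (fst p - snd p)"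
  have "?G (x, y) \<le> 0" if "x \<in> interior K" "y \<in> interior K" for x y
    using differentiable_bound[OF convex_interior[OF K(1)] has_derivative_at_withinI[OF deriv] bound that]
    by simp
  moreover have "closure (interior K \<times> interior K) = K \<times> K"
    using convex_closure_interior[OF K(1,3)] closure_closed[OF K(2)] by (simp add: closure_Times)
  moreover have "continuous_on (K \<times> K) (\<lambda>p. g (fst p))"
    by (rule continuous_on_compose2[OF cont continuous_on_fst]) auto
  moreover have "continuous_on (K \<times> K) (\<lambda>p. g (snd p))"
    by (rule continuous_on_compose2[OF cont continuous_on_snd]) auto
  ultimately have "?G (a, b) \<le> 0"
    using continuous_le_on_closure[of "interior K \<times> interior K" ?G "(a, b)" 0] assms(7,8)
    by (force intro!: continuous_intros)
  then show ?thesis by simp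
qed

lemma C1_with_deriv_onorm_small_near:
  fixes M :: "'a::euclidean_space set" and f :: "'a \<Rightarrow> 'b::euclidean_space"
  assumes "convex M" and "interior M \<noteq> {}" and U: "openin (top_of_set M) U"
    and C1: "C1_with_deriv U f f'" and y: "y \<in> U" and "e > 0"
  obtains \<rho> where "\<rho> > 0" "M \<inter> cball y \<rho> \<subseteq> U"
    "\<And>z. z \<in> M \<inter> cball y \<rho> \<Longrightarrow> onorm (\<lambda>h. f' z h - f' y h) \<le> e"
proof -
  have "\<forall>\<^sub>F z in at y within U. onorm (\<lambda>h. f' z h - f' y h) < e"
    using C1_with_deriv_onorm_tendsto[OF assms(1-5)] \<open>e > 0\<close> by (rule order_tendstoD)
  then obtain d where d: "d > 0" "\<forall>z\<in>U. z \<noteq> y \<and> dist z y < d \<longrightarrow> onorm (\<lambda>h. f' z h - f' y h) < e"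
    unfolding eventually_at by blast
  obtain r where r: "r > 0" "ball y r \<inter> M \<subseteq> U"
    using U y unfolding openin_contains_ball by blast
  define \<rho> where "\<rho> = min d r / 2"
  have "\<rho> > 0" and sub: "M \<inter> cball y \<rho> \<subseteq> U"
    using d r by (auto simp: \<rho>_def dist_commute)
  moreover have "onorm (\<lambda>h. f' z h - f' y h) \<le> e" if z: "z \<in> M \<inter> cball y \<rho>" for z
  proof (cases "z = y")
    case False
    moreover have "z \<in> U" "dist z y < d"
      using z sub d(1) by (auto simp: \<rho>_def dist_commute)
    ultimately show ?thesis
      using d(2) by fastforce
  qed (use \<open>e > 0\<close> in \<open>simp add: onorm_zero\<close>)
  ultimately show thesis by (rule that)
qed

lemma interior_Int_cball_nonempty:
  fixes M :: "'a::euclidean_space set"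
  assumes "convex M" and "interior M \<noteq> {}" and "y \<in> M" and "\<rho> > 0"
  shows "interior (M \<inter> cball y \<rho>) \<noteq> {}"
proof -
  have "y \<in> closure (interior M)"
    using assms closure_subset convex_closure_interior by blast
  then obtain p where "p \<in> interior M" "dist p y < \<rho>"
    using \<open>\<rho> > 0\<close> unfolding closure_approachable by blast
  then show ?thesis
    by (auto simp: interior_Int dist_commute)
qed

lemma C1_with_deriv_has_derivative_within:
  fixes M :: "'a::euclidean_space set" and f :: "'a \<Rightarrow> 'b::euclidean_space"
  assumes M: "convex M" "closed M" "interior M \<noteq> {}"
    and U: "openin (top_of_set M) U" and C1: "C1_with_deriv U f f'" and y: "y \<in> U"
  shows "(f has_derivative f' y) (at y within U)"
  unfolding has_derivative_within_alt
proof (intro conjI allI impI)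
  have lin: "\<And>z. z \<in> U \<Longrightarrow> linear (f' z)"
    by (rule C1_with_deriv_linear[OF M(1,3) U C1])
  then show "bounded_linear (f' y)"
    using y by (simp add: linear_conv_bounded_linear)
  fix e :: real assume "e > 0"
  obtain \<rho> where \<rho>: "\<rho> > 0" "M \<inter> cball y \<rho> \<subseteq> U"
    "\<And>z. z \<in> M \<inter> cball y \<rho> \<Longrightarrow> onorm (\<lambda>h. f' z h - f' y h) \<le> e"
    using C1_with_deriv_onorm_small_near[OF M(1,3) U C1 y \<open>e > 0\<close>] by blast
  define K where "K = M \<inter> cball y \<rho>"
  have yK: "y \<in> K"
    using y \<rho>(1) openin_imp_subset[OF U] by (auto simp: K_def)
  have bound: "norm ((f z - f' y z) - (f y - f' y y)) \<le> e * norm (z - y)" if "z \<in> K" for z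
  proof (rule differentiable_bound_closed_convex[where g' = "\<lambda>x h. f' x h - f' y h"])
    show "convex K" "closed K"
      unfolding K_def using M by (simp_all add: convex_Int closed_Int)
    show "interior K \<noteq> {}"
      unfolding K_def using interior_Int_cball_nonempty[OF M(1,3) _ \<rho>(1)] yK K_def by blast
    show "continuous_on K (\<lambda>z. f z - f' y z)"
      using C1 \<rho>(2) lin[OF y] unfolding C1_with_deriv_def K_def
      by (intro continuous_intros) (auto intro: continuous_on_subset linear_continuous_on
          simp: linear_conv_bounded_linear)
    fix x assume x: "x \<in> interior K"
    then have "x \<in> interior U" "x \<in> K"
      using interior_mono[OF \<rho>(2)] interior_subset unfolding K_def by blast+
    then show "((\<lambda>z. f z - f' y z) has_derivative (\<lambda>h. f' x h - f' y h)) (at x)"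
      using C1 lin[OF y] unfolding C1_with_deriv_def
      by (auto intro!: has_derivative_diff linear_imp_has_derivative)
    show "onorm (\<lambda>h. f' x h - f' y h) \<le> e"
      using \<open>x \<in> K\<close> \<rho>(3) unfolding K_def by blast
  qed (use that yK in auto)
  show "\<exists>\<rho>>0. \<forall>z\<in>U. norm (z - y) < \<rho> \<longrightarrow> norm (f z - f y - f' y (z - y)) \<le> e * norm (z - y)"
  proof (intro exI[of _ \<rho>] conjI ballI impI)
    fix z assume "z \<in> U" "norm (z - y) < \<rho>"
    then have "z \<in> K"
      using U unfolding K_def by (auto simp: dist_norm norm_minus_commute dest: openin_imp_subset)
    moreover have "f z - f y - f' y (z - y) = (f z - f' y z) - (f y - f' y y)"
      using linear_diff[OF lin[OF y]] by simp
    ultimately show "norm (f z - f y - f' y (z - y)) \<le> e * norm (z - y)"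
      using bound by metis
  qed (rule \<rho>(1))
qed

lemma has_vector_derivative_compose_within:
  assumes f: "(f has_derivative f') (at (\<gamma> t) within U)"
    and \<gamma>: "(\<gamma> has_vector_derivative v) (at t)"
    and "\<forall>\<^sub>F s in nhds t. \<gamma> s \<in> U"
  shows "((\<lambda>s. f (\<gamma> s)) has_vector_derivative f' v) (at t)"
proof -
  obtain S where S: "open S" "t \<in> S" "\<gamma> ` S \<subseteq> U"
    using assms(3) unfolding eventually_nhds by blast
  have "((f \<circ> \<gamma>) has_derivative (f' \<circ> (\<lambda>s. s *\<^sub>R v))) (at t within S)"
    using \<gamma> has_derivative_subset[OF f S(3)]
    by (intro diff_chain_within) (auto simp: has_vector_derivative_def intro: has_derivative_at_withinI)
  moreover have "f' \<circ> (\<lambda>s. s *\<^sub>R v) = (\<lambda>s. s *\<^sub>R f' v)"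
    using linear_scale[OF has_derivative_linear[OF f]] by auto
  ultimately show ?thesis
    using at_within_open[OF S(2,1)] by (simp add: has_vector_derivative_def o_def)
qed

lemma C1_with_deriv_has_vector_derivative_along_face_space:
  fixes \<phi> :: "'a::euclidean_space \<Rightarrow> 'b::euclidean_space"
  assumes M: "polyhedron M" "interior M \<noteq> {}" and U: "openin (top_of_set M) U"
    and C1: "C1_with_deriv U \<phi> \<phi>'" and x: "x \<in> U" and v: "v \<in> face_space M x"
  shows "((\<lambda>t. \<phi> (x + t *\<^sub>R v)) has_vector_derivative \<phi>' x v) (at 0)"
proof (rule has_vector_derivative_compose_within[where U = U])
  show "(\<phi> has_derivative \<phi>' x) (at (x + 0 *\<^sub>R v) within U)"
    using C1_with_deriv_has_derivative_within[OF polyhedron_imp_convex[OF M(1)]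
        polyhedron_imp_closed[OF M(1)] M(2) U C1 x] by simp
  show "((\<lambda>t. x + t *\<^sub>R v) has_vector_derivative v) (at 0)"
    by (auto intro!: derivative_eq_intros)
  show "\<forall>\<^sub>F t in nhds 0. x + t *\<^sub>R v \<in> U"
    by (rule eventually_line_in_openin_polyhedron[OF M(1) U x v])
qed

lemma C1_with_deriv_image_face_space:
  fixes \<phi> :: "'a::euclidean_space \<Rightarrow> 'b::euclidean_space"
  assumes M: "polyhedron M" "interior M \<noteq> {}" and N: "polyhedron N"
    and U: "openin (top_of_set M) U" and img: "\<phi> ` U \<subseteq> N"
    and C1: "C1_with_deriv U \<phi> \<phi>'" and x: "x \<in> U" and v: "v \<in> face_space M x"
  shows "\<phi>' x v \<in> face_space N (\<phi> x)"
proof -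
  obtain A where A: "finite A" "N = {z. \<forall>(a, b)\<in>A. a \<bullet> z \<le> b}"
    using polyhedron_finite_inequalities[OF N] by blast
  obtain S where S: "open S" "0 \<in> S" "\<And>t. t \<in> S \<Longrightarrow> x + t *\<^sub>R v \<in> U"
    using eventually_line_in_openin_polyhedron[OF M(1) U x v] unfolding eventually_nhds by blast
  have "a \<bullet> \<phi>' x v = 0" if ab: "(a, b) \<in> A" "a \<bullet> \<phi> x = b" for a b
  proof -
    have "((\<lambda>t. a \<bullet> \<phi> (x + t *\<^sub>R v)) has_derivative (\<lambda>t. t *\<^sub>R (a \<bullet> \<phi>' x v))) (at 0)"
      using bounded_linear.has_vector_derivative[OF bounded_linear_inner_right
          C1_with_deriv_has_vector_derivative_along_face_space[OF M U C1 x v]]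
      by (simp add: has_vector_derivative_def)
    moreover have "\<forall>t\<in>S. a \<bullet> \<phi> (x + t *\<^sub>R v) \<le> a \<bullet> \<phi> (x + 0 *\<^sub>R v)"
      using S(3) img ab A(2) by fastforce
    ultimately have "(\<lambda>t. t *\<^sub>R (a \<bullet> \<phi>' x v)) = (\<lambda>t. 0)"
      using differential_zero_maxmin[OF S(2,1)] by blast
    then show ?thesis by (metis scaleR_one)
  qed
  then have "\<phi>' x v \<in> active_kernel A (\<phi> x)"
    unfolding active_kernel_def by auto
  then show ?thesis
    using face_space_eq_active_kernel[OF A] img x by blast
qed

lemma C1_with_deriv_right_inverse_on_face_space:
  fixes \<phi> :: "'a::euclidean_space \<Rightarrow> 'b::euclidean_space" and \<psi> :: "'b \<Rightarrow> 'a"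
  assumes M: "polyhedron M" "interior M \<noteq> {}" and N: "polyhedron N" "interior N \<noteq> {}"
    and U: "openin (top_of_set M) U" and V: "openin (top_of_set N) V"
    and C1\<phi>: "C1_with_deriv U \<phi> \<phi>'" and C1\<psi>: "C1_with_deriv V \<psi> \<psi>'"
    and \<psi>V: "\<psi> ` V \<subseteq> U" and \<phi>\<psi>: "\<And>z. z \<in> V \<Longrightarrow> \<phi> (\<psi> z) = z"
    and y: "y \<in> V" and w: "w \<in> face_space N y"
  shows "\<phi>' (\<psi> y) (\<psi>' y w) = w"
proof -
  have line: "\<forall>\<^sub>F t in nhds 0. y + t *\<^sub>R w \<in> V"
    by (rule eventually_line_in_openin_polyhedron[OF N(1) V y w])
  have "((\<lambda>t. \<phi> (\<psi> (y + t *\<^sub>R w))) has_vector_derivative \<phi>' (\<psi> y) (\<psi>' y w)) (at 0)"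
  proof (rule has_vector_derivative_compose_within[where U = U])
    show "(\<phi> has_derivative \<phi>' (\<psi> y)) (at (\<psi> (y + 0 *\<^sub>R w)) within U)"
      using C1_with_deriv_has_derivative_within[OF polyhedron_imp_convex[OF M(1)]
          polyhedron_imp_closed[OF M(1)] M(2) U C1\<phi>] \<psi>V y by auto
    show "((\<lambda>t. \<psi> (y + t *\<^sub>R w)) has_vector_derivative \<psi>' y w) (at 0)"
      by (rule C1_with_deriv_has_vector_derivative_along_face_space[OF N V C1\<psi> y w])
    show "\<forall>\<^sub>F t in nhds 0. \<psi> (y + t *\<^sub>R w) \<in> U"
      using line by (rule eventually_mono) (use \<psi>V in blast)
  qed
  moreover have "((\<lambda>t. \<phi> (\<psi> (y + t *\<^sub>R w))) has_vector_derivative w) (at 0)"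
  proof -
    have "((\<lambda>t. y + t *\<^sub>R w) has_vector_derivative w) (at 0)"
      by (auto intro!: derivative_eq_intros)
    then show ?thesis
      using line \<phi>\<psi> y
      by (subst has_vector_derivative_cong_ev[where g = "\<lambda>t. y + t *\<^sub>R w"])
        (auto elim: eventually_mono)
  qed
  ultimately show ?thesis
    by (rule vector_derivative_unique_at)
qed

lemma C1_diffeo_image_face_space_eq:
  fixes \<phi> :: "'a::euclidean_space \<Rightarrow> 'b::euclidean_space"
  assumes M: "polyhedron M" "interior M \<noteq> {}" and N: "polyhedron N" "interior N \<noteq> {}"
    and U: "openin (top_of_set M) U" and V: "openin (top_of_set N) V"
    and diffeo: "C1_diffeo U V \<phi>" and C1: "C1_with_deriv U \<phi> \<phi>'" and x: "x \<in> U"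
  shows "\<phi>' x ` face_space M x = face_space N (\<phi> x)"
proof -
  obtain \<psi>' where bij: "bij_betw \<phi> U V" and C1\<psi>: "C1_with_deriv V (inv_into U \<phi>) \<psi>'"
    using diffeo unfolding C1_diffeo_def C1_map_def by blast
  let ?\<psi> = "inv_into U \<phi>"
  have \<psi>V: "?\<psi> ` V \<subseteq> U" and \<psi>\<phi>: "?\<psi> (\<phi> x) = x" and \<phi>x: "\<phi> x \<in> V" and \<phi>U: "\<phi> ` U \<subseteq> N"
    using bij x openin_imp_subset[OF V] by (auto simp: bij_betw_def inv_into_into)
  have \<phi>\<psi>: "\<phi> (?\<psi> z) = z" if "z \<in> V" for z
    using bij that by (simp add: bij_betw_def f_inv_into_f)
  have "w \<in> \<phi>' x ` face_space M x" if w: "w \<in> face_space N (\<phi> x)" for w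
  proof
    show "w = \<phi>' x (\<psi>' (\<phi> x) w)"
      using C1_with_deriv_right_inverse_on_face_space[OF M N U V C1 C1\<psi> \<psi>V \<phi>\<psi> \<phi>x w] \<psi>\<phi>
      by simp
    have "?\<psi> ` V \<subseteq> M"
      using \<psi>V openin_imp_subset[OF U] by blast
    then show "\<psi>' (\<phi> x) w \<in> face_space M x"
      using C1_with_deriv_image_face_space[OF N M(1) V _ C1\<psi> \<phi>x w] \<psi>\<phi> by simp
  qed
  then show ?thesis
    using C1_with_deriv_image_face_space[OF M N(1) U \<phi>U C1 x] by blast
qed

theorem lemma5p2:
  fixes M :: "'a::euclidean_space set" and N :: "'b::euclidean_space set"
    and U :: "'a set" and V :: "'b set"
    and \<phi> :: "'a \<Rightarrow> 'b" and \<phi>' :: "'a \<Rightarrow> 'a \<Rightarrow> 'b"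
  assumes "polytope M" and "interior M \<noteq> {}"
    and "polytope N" and "interior N \<noteq> {}"
    and "openin (top_of_set M) U" and "openin (top_of_set N) V"
    and "\<phi> ` U \<subseteq> V"
    and "C1_with_deriv U \<phi> \<phi>'"
  shows "\<forall>x\<in>U.
           \<phi>' x ` face_space M x \<subseteq> face_space N (\<phi> x) \<and>
           (inj (\<phi>' x) \<longrightarrow> dim (face_space M x) \<le> dim (face_space N (\<phi> x))) \<and>
           (C1_diffeo U V \<phi> \<longrightarrow> \<phi>' x ` face_space M x = face_space N (\<phi> x))"
proof (intro ballI conjI impI)
  fix x assume x: "x \<in> U"
  have M: "polyhedron M" "interior M \<noteq> {}" and N: "polyhedron N" "interior N \<noteq> {}"
    using assms(1-4) by (simp_all add: polytope_imp_polyhedron)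
  have "\<phi> ` U \<subseteq> N"
    using assms(6,7) openin_imp_subset by blast
  then show image: "\<phi>' x ` face_space M x \<subseteq> face_space N (\<phi> x)"
    using C1_with_deriv_image_face_space[OF M N(1) assms(5) _ assms(8) x] by blast
  have "linear (\<phi>' x)"
    by (rule C1_with_deriv_linear[OF polyhedron_imp_convex[OF M(1)] M(2) assms(5,8) x])
  then show "dim (face_space M x) \<le> dim (face_space N (\<phi> x))" if "inj (\<phi>' x)"
    using dim_image_eq dim_subset[OF image] that by (metis inj_on_subset subset_UNIV)
  show "\<phi>' x ` face_space M x = face_space N (\<phi> x)" if "C1_diffeo U V \<phi>"
    by (rule C1_diffeo_image_face_space_eq[OF M N assms(5,6) that assms(8) x])
qed

end
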